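(* Let $k\ge 1$ and $\ell$ be integers with $0\le\ell\le 2k-1$, and fix a vertex set of size $n$. Let $\mathcal{N}_{k,\ell}$ be the family of multigraphs $G$ on these $n$ vertices (subgraphs of $K_n^{k,2k}$) such that $G$ has $m=kn-\ell$ edges and $G$ is $(k,0)$-sparse. Then $\mathcal{N}_{k,\ell}$ (viewed as a family of edge sets) is the class of bases of a matroid that is a truncation of the $k$-fold union of the bicycle matroid.
   Context: Graphs are multigraphs, possibly with loops. A graph is $(k,0)$-sparse if no subset $V'$ of $n'$ vertices spans more than $kn'$ edges. $K_n^{k,2k}$ is the multigraph on $n$ vertices with $k$ loops at each vertex and $2k$ parallel edges between each pair of distinct vertices; the matroids are on its edge set. The bicycle matroid has as independent sets the edge sets in which each connected component contains at most one cycle (pseudoforests; a loop counts as a cycle); its bases on a vertex set are the spanning maps, i.e. graphs admitting an orientation in which every vertex has out-degree exactly $1$. The $k$-fold union of a matroid $\mathcal{M}$ has as independent sets the unions of $k$ independent sets of $\mathcal{M}$. The truncation of a matroid $\mathcal{M}=(E,\mathcal{I})$ at a nonnegative integer $r$ is the matroid $(E,\{E'\in\mathcal{I}:|E'|\le r\})$. *)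

theory Defs
  imports Main
begin

(* Edges of K_n^{k,2k}: a labelled edge (u, v, i) with endpoints u, v.
   Vertices are {0..<n}.  Loops: (v, v, i) with i < k.
   Non-loops: (u, v, i) with u < v and i < 2k. *)
type_synonym edge = "nat \<times> nat \<times> nat"

definition ends :: "edge \<Rightarrow> nat set" where
  "ends e = {fst e, fst (snd e)}"

definition is_loop :: "edge \<Rightarrow> bool" where
  "is_loop e \<longleftrightarrow> fst e = fst (snd e)"

definition Kgraph :: "nat \<Rightarrow> nat \<Rightarrow> edge set" where
  "Kgraph n k =
     {(v, v, i) | v i. v < n \<and> i < k} \<union> {(u, v, i) | u v i. u < v \<and> v < n \<and> i < 2 * k}"

definition verts :: "edge set \<Rightarrow> nat set" where
  "verts F = (\<Union>e\<in>F. ends e)"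

definition reach :: "edge set \<Rightarrow> nat \<Rightarrow> nat \<Rightarrow> bool" where
  "reach F x y \<longleftrightarrow> (x, y) \<in> {(a, b). \<exists>e\<in>F. ends e = {a, b}}\<^sup>*"

definition deg :: "edge set \<Rightarrow> nat \<Rightarrow> nat" where
  "deg F x = card {e\<in>F. x \<in> ends e \<and> \<not> is_loop e} + 2 * card {e\<in>F. ends e = {x}}"

(* a cycle: nonempty finite connected edge set in which every vertex has degree 2
   (a single loop and a pair of parallel edges are cycles) *)
definition is_cycle :: "edge set \<Rightarrow> bool" where
  "is_cycle C \<longleftrightarrow> C \<noteq> {} \<and> finite C \<and>
     (\<forall>x\<in>verts C. \<forall>y\<in>verts C. reach C x y) \<and>
     (\<forall>x\<in>verts C. deg C x = 2)"

(* bicycle matroid on K_n^{k,2k}: every connected component contains at most one cycle,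
   i.e. two distinct cycles of F never lie in the same component of F *)
definition bicycle_indep :: "nat \<Rightarrow> nat \<Rightarrow> edge set \<Rightarrow> bool" where
  "bicycle_indep n k F \<longleftrightarrow> F \<subseteq> Kgraph n k \<and>
     (\<forall>C1 C2. C1 \<subseteq> F \<longrightarrow> C2 \<subseteq> F \<longrightarrow> is_cycle C1 \<longrightarrow> is_cycle C2 \<longrightarrow> C1 \<noteq> C2 \<longrightarrow>
        \<not> (\<exists>x\<in>verts C1. \<exists>y\<in>verts C2. reach F x y))"

definition union_indep :: "nat \<Rightarrow> (edge set \<Rightarrow> bool) \<Rightarrow> edge set \<Rightarrow> bool" where
  "union_indep k I X \<longleftrightarrow> (\<exists>f. (\<forall>i<k. I (f i)) \<and> X = (\<Union>i<k. f i))"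

definition trunc_indep :: "nat \<Rightarrow> (edge set \<Rightarrow> bool) \<Rightarrow> edge set \<Rightarrow> bool" where
  "trunc_indep r I X \<longleftrightarrow> I X \<and> card X \<le> r"

definition matroid :: "'a set \<Rightarrow> ('a set \<Rightarrow> bool) \<Rightarrow> bool" where
  "matroid E I \<longleftrightarrow> finite E \<and> (\<forall>X. I X \<longrightarrow> X \<subseteq> E) \<and> I {} \<and>
     (\<forall>X Y. I Y \<longrightarrow> X \<subseteq> Y \<longrightarrow> I X) \<and>
     (\<forall>X Y. I X \<longrightarrow> I Y \<longrightarrow> card X < card Y \<longrightarrow> (\<exists>e\<in>Y - X. I (insert e X)))"

definition bases :: "('a set \<Rightarrow> bool) \<Rightarrow> 'a set set" where
  "bases I = {B. I B \<and> (\<forall>B'. I B' \<longrightarrow> B \<subseteq> B' \<longrightarrow> B' = B)}"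

definition sparse :: "nat \<Rightarrow> nat \<Rightarrow> edge set \<Rightarrow> bool" where
  "sparse n k G \<longleftrightarrow> (\<forall>V' \<subseteq> {0..<n}. card {e\<in>G. ends e \<subseteq> V'} \<le> k * card V')"

definition Nfam :: "nat \<Rightarrow> nat \<Rightarrow> nat \<Rightarrow> edge set set" where
  "Nfam n k l = {G. G \<subseteq> Kgraph n k \<and> int (card G) = int k * int n - int l \<and> sparse n k G}"

end

theory Submission
  imports Defs
begin

text \<open>
  A set of edges is (k,0)-sparse iff it is the union of k pseudoforests. If it is sparse, Hakimi's
  theorem orients it with in-degree at most k everywhere, and distributing the edges entering
  each vertex over k classes yields k edge sets on which the head map is injective; such a set
  cannot have two cycles in one component, since a component with two cycles has more edges than
  vertices. Conversely a pseudoforest spans at most |V| edges on every vertex set V, because a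
  minimal counterexample is connected and contains two distinct cycles. The sparse sets form a
  matroid, as tight vertex sets are closed under union, and since the k loops at every vertex form
  a sparse set of kn edges, the bases of its truncation at kn - l are exactly the sparse sets with
  kn - l edges.
\<close>

definition adj :: "edge set \<Rightarrow> (nat \<times> nat) set" where
  "adj F = {(a, b). \<exists>e\<in>F. ends e = {a, b}}"

definition induced :: "edge set \<Rightarrow> nat set \<Rightarrow> edge set" where
  "induced F V = {e\<in>F. ends e \<subseteq> V}"

lemma sparse_induced: "sparse n k G \<longleftrightarrow> (\<forall>V\<subseteq>{0..<n}. card (induced G V) \<le> k * card V)"
  by (simp add: sparse_def induced_def)

lemma induced_subset: "induced F V \<subseteq> F"
  by (auto simp: induced_def)

lemma finite_induced: "finite F \<Longrightarrow> finite (induced F V)"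
  by (simp add: induced_def)

lemma finite_ends: "finite (ends e)"
  by (simp add: ends_def)

lemma ends_nonempty: "ends e \<noteq> {}"
  by (simp add: ends_def)

lemma finite_verts: "finite F \<Longrightarrow> finite (verts F)"
  by (simp add: verts_def finite_ends)

lemma verts_Un: "verts (A \<union> B) = verts A \<union> verts B"
  by (auto simp: verts_def)

lemma verts_mono: "A \<subseteq> B \<Longrightarrow> verts A \<subseteq> verts B"
  by (auto simp: verts_def)

lemma verts_induced_subset: "verts (induced F V) \<subseteq> V"
  by (auto simp: verts_def induced_def)

lemma verts_nonempty: "F \<noteq> {} \<Longrightarrow> verts F \<noteq> {}"
  using ends_nonempty by (auto simp: verts_def)

lemma finite_Kgraph: "finite (Kgraph n k)"
proof (rule finite_subset)
  show "Kgraph n k \<subseteq> {..<n} \<times> {..<n} \<times> {..<2*k}"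
    by (auto simp: Kgraph_def)
qed auto

lemma ends_Kgraph: "e \<in> Kgraph n k \<Longrightarrow> ends e \<subseteq> {0..<n}"
  by (auto simp: Kgraph_def ends_def)

lemma ends_loop: "is_loop e \<Longrightarrow> ends e = {fst e}"
  by (simp add: is_loop_def ends_def)

lemma reach_iff_rtrancl: "reach F x y \<longleftrightarrow> (x, y) \<in> (adj F)\<^sup>*"
  by (simp add: reach_def adj_def)

lemma reach_refl: "reach F x x"
  by (simp add: reach_iff_rtrancl)

lemma reach_trans: "reach F x y \<Longrightarrow> reach F y z \<Longrightarrow> reach F x z"
  by (simp add: reach_iff_rtrancl)

lemma reach_mono: "F \<subseteq> G \<Longrightarrow> reach F x y \<Longrightarrow> reach G x y"
  unfolding reach_iff_rtrancl adj_def by (erule rtrancl_mono[THEN subsetD, rotated]) blast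

lemma reach_edge: "e \<in> F \<Longrightarrow> a \<in> ends e \<Longrightarrow> b \<in> ends e \<Longrightarrow> reach F a b"
proof (cases "a = b")
  case False
  assume "e \<in> F" "a \<in> ends e" "b \<in> ends e"
  with False have "(a, b) \<in> adj F"
    by (auto simp: adj_def ends_def)
  then show ?thesis by (simp add: reach_iff_rtrancl)
qed (simp add: reach_refl)

lemma reach_induct[consumes 1, case_names refl step]:
  assumes "reach F x y"
    and "P x"
    and "\<And>y z e. reach F x y \<Longrightarrow> P y \<Longrightarrow> e \<in> F \<Longrightarrow> ends e = {y, z} \<Longrightarrow> P z"
  shows "P y"
  using assms(1) unfolding reach_iff_rtrancl
proof (induction rule: rtrancl_induct)
  case (step y z)
  then obtain e where "e \<in> F" "ends e = {y, z}"
    by (auto simp: adj_def)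
  with step show ?case
    using assms(3) by (simp add: reach_iff_rtrancl)
qed (rule assms(2))

lemma component_subset: "{z. reach F x z} \<subseteq> insert x (verts F)"
proof (safe)
  fix z assume "reach F x z" "z \<notin> verts F"
  then show "z = x"
    by (induction rule: reach_induct) (auto simp: verts_def)
qed

lemma finite_component: "finite F \<Longrightarrow> finite {z. reach F x z}"
  by (meson component_subset finite_insert finite_subset finite_verts)

lemma component_closed:
  assumes "f \<in> G" "z \<in> ends f" "reach G x z"
  shows "ends f \<subseteq> {w. reach G x w}"
  using assms reach_edge reach_trans by blast

subsection \<open>Orientations with bounded in-degree\<close>

lemma card_induced_supermodular:
  assumes "finite F"
  shows "card (induced F V1) + card (induced F V2)
           \<le> card (induced F (V1 \<union> V2)) + card (induced F (V1 \<inter> V2))"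
proof -
  have "card (induced F V1) + card (induced F V2)
          = card (induced F V1 \<union> induced F V2) + card (induced F V1 \<inter> induced F V2)"
    using assms by (intro card_Un_Int finite_induced)
  moreover have "induced F V1 \<inter> induced F V2 = induced F (V1 \<inter> V2)"
    by (auto simp: induced_def)
  moreover have "card (induced F V1 \<union> induced F V2) \<le> card (induced F (V1 \<union> V2))"
    using assms by (intro card_mono finite_induced) (auto simp: induced_def)
  ultimately show ?thesis
    by (metis add_le_mono1)
qed

lemma card_induced_insert:
  assumes "finite F" "e \<notin> F"
  shows "card (induced (insert e F) V) = card (induced F V) + (if ends e \<subseteq> V then 1 else 0)"
proof -
  have "induced (insert e F) V = (if ends e \<subseteq> V then insert e (induced F V) else induced F V)"
    by (auto simp: induced_def)
  then show ?thesis
    using assms by (simp add: finite_induced induced_def)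
qed

text \<open>The edge e can be directed to one of its ends within the capacities c: if both ends lay in
  tight sets, so would the union of these sets, by supermodularity, and e would overfill it.\<close>

lemma exists_end_within_capacity:
  fixes c :: "nat \<Rightarrow> nat"
  assumes F: "finite F" and W: "finite W"
    and cap: "\<And>V. V \<subseteq> W \<Longrightarrow> card (induced F V) + (if ends e \<subseteq> V then 1 else 0) \<le> sum c V"
  shows "\<exists>a\<in>ends e. \<forall>V\<subseteq>W. card (induced F V) + (if a \<in> V then 1 else 0) \<le> sum c V"
proof (rule ccontr)
  assume "\<not> ?thesis"
  then have no_end: "\<forall>a\<in>ends e. \<exists>V\<subseteq>W. sum c V < card (induced F V) + (if a \<in> V then 1 else 0)"
    by (auto simp: not_le)
  have tight_at: "\<exists>V\<subseteq>W. a \<in> V \<and> sum c V \<le> card (induced F V)" if a: "a \<in> ends e" for a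
  proof -
    obtain V where V: "V \<subseteq> W" "sum c V < card (induced F V) + (if a \<in> V then 1 else 0)"
      using no_end a by blast
    moreover have "card (induced F V) \<le> sum c V"
      using cap[OF V(1)] by simp
    ultimately have "a \<in> V" "sum c V \<le> card (induced F V)"
      by (cases "a \<in> V"; simp)+
    with V(1) show ?thesis
      by blast
  qed
  obtain V1 where V1: "V1 \<subseteq> W" "fst e \<in> V1" "sum c V1 \<le> card (induced F V1)"
    using tight_at[of "fst e"] by (auto simp: ends_def)
  obtain V2 where V2: "V2 \<subseteq> W" "fst (snd e) \<in> V2" "sum c V2 \<le> card (induced F V2)"
    using tight_at[of "fst (snd e)"] by (auto simp: ends_def)
  have "finite V1" "finite V2"
    using V1 V2 W finite_subset by auto
  then have "sum c (V1 \<union> V2) + sum c (V1 \<inter> V2) = sum c V1 + sum c V2"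
    by (simp add: sum.union_inter)
  moreover have "card (induced F (V1 \<inter> V2)) \<le> sum c (V1 \<inter> V2)"
    using cap[of "V1 \<inter> V2"] V1 by (simp add: le_infI1 split: if_splits)
  moreover have "card (induced F (V1 \<union> V2)) + 1 \<le> sum c (V1 \<union> V2)"
    using cap[of "V1 \<union> V2"] V1 V2 by (auto simp: ends_def)
  ultimately show False
    using card_induced_supermodular[OF F, of V1 V2] V1 V2 by linarith
qed

lemma capacity_decrement:
  fixes c :: "nat \<Rightarrow> nat"
  assumes W: "finite W" and a: "a \<in> W"
    and cap: "\<And>V. V \<subseteq> W \<Longrightarrow> card (induced F V) + (if a \<in> V then 1 else 0) \<le> sum c V"
    and V: "V \<subseteq> W"
  shows "card (induced F V) \<le> sum (c(a := c a - 1)) V"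
proof -
  have ca: "1 \<le> c a"
    using cap[of "{a}"] a by simp
  show ?thesis
  proof (cases "a \<in> V")
    case True
    have "finite V" using V W finite_subset by blast
    with True have "sum c V = c a + sum c (V - {a})" "sum (c(a := c a - 1)) V = c a - 1 + sum c (V - {a})"
      by (simp_all add: sum.remove)
    then show ?thesis using cap[OF V] True ca by simp
  next
    case False
    then have "sum (c(a := c a - 1)) V = sum c V"
      by (intro sum.cong) auto
    then show ?thesis using cap[OF V] False by simp
  qed
qed

text \<open>Hakimi's theorem; h e is the head of the edge e.\<close>

lemma orientation_with_bounded_indegree:
  fixes c :: "nat \<Rightarrow> nat"
  assumes "finite F" "finite W" "\<forall>e\<in>F. ends e \<subseteq> W"
    and "\<forall>V\<subseteq>W. card (induced F V) \<le> sum c V"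
  shows "\<exists>h. (\<forall>e\<in>F. h e \<in> ends e) \<and> (\<forall>v\<in>W. card {e\<in>F. h e = v} \<le> c v)"
  using assms
proof (induction F arbitrary: c rule: finite_induct)
  case (insert e F)
  have cap: "card (induced F V) + (if ends e \<subseteq> V then 1 else 0) \<le> sum c V" if "V \<subseteq> W" for V
    using insert.prems(3) that card_induced_insert[OF insert.hyps(1,2)] by metis
  obtain a where a: "a \<in> ends e"
    and cap_a: "\<forall>V\<subseteq>W. card (induced F V) + (if a \<in> V then 1 else 0) \<le> sum c V"
    using exists_end_within_capacity[OF insert.hyps(1) \<open>finite W\<close> cap] by blast
  have aW: "a \<in> W" using a insert.prems(2) by blast
  have cap': "\<forall>V\<subseteq>W. card (induced F V) \<le> sum (c(a := c a - 1)) V"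
    using capacity_decrement[OF \<open>finite W\<close> aW] cap_a by blast
  obtain h where h: "\<forall>f\<in>F. h f \<in> ends f"
    and load: "\<forall>v\<in>W. card {f\<in>F. h f = v} \<le> (c(a := c a - 1)) v"
    using insert.IH[OF \<open>finite W\<close> _ cap'] insert.prems(2) by auto
  have ca: "1 \<le> c a"
    using cap_a[rule_format, of "{a}"] aW by simp
  define h' where "h' = h(e := a)"
  have "card {f\<in>insert e F. h' f = v} \<le> c v" if "v \<in> W" for v
  proof -
    have "{f\<in>insert e F. h' f = v} = (if v = a then insert e {f\<in>F. h f = v} else {f\<in>F. h f = v})"
      using insert.hyps(2) by (auto simp: h'_def)
    then show ?thesis
      using load that ca insert.hyps by auto
  qed
  moreover have "\<forall>f\<in>insert e F. h' f \<in> ends f"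
    using h a by (simp add: h'_def)
  ultimately show ?case by blast
qed simp

definition incidence :: "edge \<Rightarrow> nat \<Rightarrow> nat" where
  "incidence e v = (if v \<in> ends e then (if is_loop e then 2 else 1) else 0)"

lemma deg_eq_sum_incidence:
  assumes "finite G"
  shows "deg G v = (\<Sum>e\<in>G. incidence e v)"
proof -
  have "ends e = {v} \<longleftrightarrow> v \<in> ends e \<and> is_loop e" for e
    by (auto simp: is_loop_def ends_def doubleton_eq_iff)
  then have "card {e\<in>G. ends e = {v}} = (\<Sum>e\<in>G. if v \<in> ends e \<and> is_loop e then 1 else 0)"
    using assms by (simp add: sum.inter_filter[symmetric])
  moreover have "card {e\<in>G. v \<in> ends e \<and> \<not> is_loop e}
                   = (\<Sum>e\<in>G. if v \<in> ends e \<and> \<not> is_loop e then 1 else 0)"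
    using assms by (simp add: sum.inter_filter[symmetric])
  ultimately have "deg G v = (\<Sum>e\<in>G. (if v \<in> ends e \<and> \<not> is_loop e then 1 else 0)
                                  + 2 * (if v \<in> ends e \<and> is_loop e then 1 else 0))"
    by (simp add: deg_def sum.distrib sum_distrib_left)
  also have "\<dots> = (\<Sum>e\<in>G. incidence e v)"
    by (rule sum.cong) (auto simp: incidence_def)
  finally show ?thesis .
qed

lemma sum_incidence:
  assumes "finite S" "ends e \<subseteq> S"
  shows "(\<Sum>v\<in>S. incidence e v) = 2"
proof -
  have "(\<Sum>v\<in>S. incidence e v) = (\<Sum>v\<in>ends e. incidence e v)"
    using assms by (intro sum.mono_neutral_right) (auto simp: incidence_def)
  also have "\<dots> = 2"
    by (cases "is_loop e") (simp_all add: ends_loop incidence_def ends_def is_loop_def)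
  finally show ?thesis .
qed

lemma handshake:
  assumes "finite G" "finite S" "verts G \<subseteq> S"
  shows "(\<Sum>v\<in>S. deg G v) = 2 * card G"
proof -
  have "(\<Sum>v\<in>S. deg G v) = (\<Sum>e\<in>G. \<Sum>v\<in>S. incidence e v)"
    using assms(1) by (simp add: deg_eq_sum_incidence sum.swap[of _ S])
  also have "\<dots> = (\<Sum>e\<in>G. 2)"
    using assms by (intro sum.cong sum_incidence) (auto simp: verts_def)
  finally show ?thesis by simp
qed

lemma deg_Diff_edge:
  assumes "finite G" "e \<in> G"
  shows "deg G v = deg (G - {e}) v + incidence e v"
  using assms by (simp add: deg_eq_sum_incidence sum.remove)

lemma deg_induced:
  assumes "finite G" "\<forall>f\<in>G. v \<in> ends f \<longrightarrow> ends f \<subseteq> S"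
  shows "deg (induced G S) v = deg G v"
proof -
  have "(\<Sum>f\<in>induced G S. incidence f v) = (\<Sum>f\<in>G. incidence f v)"
    using assms by (intro sum.mono_neutral_left) (auto simp: induced_def incidence_def)
  then show ?thesis
    using assms(1) by (simp add: deg_eq_sum_incidence finite_induced)
qed

text \<open>An edge e of a cycle C with exactly one end in a component S of C - {e} would make the
  degree sum over S odd.\<close>

lemma cycle_edge_in_component:
  assumes C: "is_cycle C" and e: "e \<in> C" and p: "p \<in> verts C"
    and z: "z \<in> ends e" "reach (C - {e}) p z"
  shows "ends e \<subseteq> {w. reach (C - {e}) p w}"
proof (rule ccontr)
  define S where "S = {w. reach (C - {e}) p w}"
  assume "\<not> ends e \<subseteq> {w. reach (C - {e}) p w}"
  then obtain z' where z': "z' \<in> ends e" "z' \<notin> S"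
    by (auto simp: S_def)
  have zS: "z \<in> S" using z by (simp add: S_def)
  have ends_e: "ends e = {z, z'}" and not_loop: "\<not> is_loop e"
    using z z' zS by (auto simp: ends_def is_loop_def S_def)
  have fC: "finite C" using C by (simp add: is_cycle_def)
  have S_verts: "S \<subseteq> verts C"
    using component_subset[of "C - {e}" p] p verts_mono[of "C - {e}" C] by (auto simp: S_def)
  have fS: "finite S"
    using S_verts finite_verts[OF fC] finite_subset by blast
  define G where "G = induced (C - {e}) S"
  have deg_G: "deg (C - {e}) v = deg G v" if "v \<in> S" for v
    unfolding G_def using fC that component_closed[of _ "C - {e}" v p]
    by (intro deg_induced[symmetric]) (auto simp: S_def)
  have "2 * card S = (\<Sum>v\<in>S. deg C v)"
    using S_verts C by (simp add: is_cycle_def subset_iff)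
  also have "\<dots> = (\<Sum>v\<in>S. deg G v) + (\<Sum>v\<in>S. incidence e v)"
    using deg_Diff_edge[OF fC e] deg_G by (simp add: sum.distrib)
  also have "(\<Sum>v\<in>S. deg G v) = 2 * card G"
    using fC fS verts_induced_subset by (intro handshake) (auto simp: G_def finite_induced)
  also have "(\<Sum>v\<in>S. incidence e v) = incidence e z"
    using fS zS z' ends_e by (intro sum.mono_neutral_right[of S "{z}", simplified])
      (auto simp: incidence_def)
  also have "incidence e z = 1"
    using not_loop ends_e by (simp add: incidence_def)
  finally show False by presburger
qed

lemma reach_cycle_Diff_edge:
  assumes C: "is_cycle C" and e: "e \<in> C" and p: "p \<in> verts C" and q: "q \<in> verts C"
  shows "reach (C - {e}) p q"
proof -
  have "reach C p q" using C p q by (simp add: is_cycle_def)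
  then show ?thesis
  proof (induction rule: reach_induct)
    case (step y z f)
    then have "ends f \<subseteq> {w. reach (C - {e}) p w}"
      using cycle_edge_in_component[OF C e p] component_closed[of f "C - {e}" y p]
      by (cases "f = e") auto
    then show ?case using step by auto
  qed (rule reach_refl)
qed

lemma reach_Diff_cycle_edge:
  assumes C: "is_cycle C" "C \<subseteq> G" and e: "e \<in> C" and r: "reach G x y"
  shows "reach (G - {e}) x y"
  using r
proof (induction rule: reach_induct)
  case (step y z f)
  have "reach (G - {e}) y z"
  proof (cases "f = e")
    case True
    with step e have "y \<in> verts C" "z \<in> verts C"
      by (auto simp: verts_def)
    then have "reach (C - {e}) y z"
      by (rule reach_cycle_Diff_edge[OF C(1) e])
    then show ?thesis
      by (rule reach_mono[rotated]) (use C in auto)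
  next
    case False
    then show ?thesis using step by (intro reach_edge[of f]) auto
  qed
  then show ?case using step.IH reach_trans by blast
qed (rule reach_refl)

subsection \<open>Pseudoforests\<close>

text \<open>The edge through which breadth-first search first reaches a vertex z is injective in z.\<close>

lemma card_component_le:
  assumes fG: "finite G"
  shows "card {z. reach G x z} \<le> card (induced G {z. reach G x z}) + 1"
proof -
  define K where "K = {z. reach G x z}"
  define d where "d z = (LEAST m. (x, z) \<in> adj G ^^ m)" for z
  define parent_edge where "parent_edge z e \<longleftrightarrow> e \<in> G \<and> (\<exists>w. ends e = {w, z} \<and> d w < d z \<and> w \<in> K)"
    for z e
  have parent_exists: "\<exists>e. parent_edge z e" if z: "z \<in> K - {x}" for z
  proof -
    have "(x, z) \<in> (adj G)\<^sup>*" using z by (simp add: K_def reach_iff_rtrancl)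
    then obtain m0 where "(x, z) \<in> adj G ^^ m0" using rtrancl_power by blast
    then have dz: "(x, z) \<in> adj G ^^ d z" unfolding d_def by (rule LeastI)
    then obtain m where m: "d z = Suc m"
      using z by (cases "d z") auto
    obtain w where w: "(x, w) \<in> adj G ^^ m" "(w, z) \<in> adj G"
      using dz unfolding m by (rule relpow_Suc_E) blast
    have "d w < d z" using m Least_le[of _ m] w(1) by (fastforce simp: d_def)
    moreover have "w \<in> K" using w(1) relpow_imp_rtrancl by (auto simp: K_def reach_iff_rtrancl)
    moreover obtain f where "f \<in> G" "ends f = {w, z}" using w(2) by (auto simp: adj_def)
    ultimately show ?thesis unfolding parent_edge_def by blast
  qed
  define par where "par z = (SOME e. parent_edge z e)" for z
  have par: "parent_edge z (par z)" if "z \<in> K - {x}" for z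
    using parent_exists[OF that] unfolding par_def by (rule someI_ex)
  have "inj_on par (K - {x})"
  proof (rule inj_onI)
    fix z1 z2 assume z: "z1 \<in> K - {x}" "z2 \<in> K - {x}" and eq: "par z1 = par z2"
    obtain w1 w2 where "ends (par z1) = {w1, z1}" "d w1 < d z1"
      "ends (par z2) = {w2, z2}" "d w2 < d z2"
      using par[OF z(1)] par[OF z(2)] by (auto simp: parent_edge_def)
    with eq show "z1 = z2" by (auto simp: doubleton_eq_iff)
  qed
  moreover have "par ` (K - {x}) \<subseteq> induced G K"
    using par by (fastforce simp: parent_edge_def induced_def)
  ultimately have "card (K - {x}) \<le> card (induced G K)"
    using fG by (intro card_inj_on_le finite_induced)
  moreover have "x \<in> K" "finite K"
    using finite_component[OF fG] by (auto simp: K_def reach_refl)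
  ultimately show ?thesis by (simp add: K_def card_Diff_singleton)
qed

text \<open>Two distinct cycles in one component contain two edges whose removal keeps the component
  connected, so the component has more edges than vertices; an injective choice of one end per
  edge allows at most as many edges as vertices.\<close>

lemma injective_ends_no_two_cycles_in_component:
  assumes fF: "finite F" and h: "\<forall>e\<in>F. h e \<in> ends e" and inj: "inj_on h F"
    and C1: "is_cycle C1" "C1 \<subseteq> F" and C2: "is_cycle C2" "C2 \<subseteq> F"
    and e1: "e1 \<in> C1" "e1 \<notin> C2"
    and V1: "verts C1 \<subseteq> {z. reach F x z}" and V2: "verts C2 \<subseteq> {z. reach F x z}"
  shows False
proof -
  define K where "K = {z. reach F x z}"
  obtain e2 where e2: "e2 \<in> C2" using C2 by (auto simp: is_cycle_def)
  have fK: "finite K" unfolding K_def by (rule finite_component[OF fF])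
  have "h ` induced F K \<subseteq> K" "inj_on h (induced F K)"
    using h inj_on_subset[OF inj induced_subset] by (auto simp: induced_def)
  then have le_K: "card (induced F K) \<le> card K"
    using fK by (simp add: card_inj_on_le)
  define F' where "F' = F - {e1} - {e2}"
  have "reach F' x z" if "z \<in> K" for z
  proof -
    have "reach (F - {e1}) x z"
      using reach_Diff_cycle_edge[OF C1 e1(1)] that by (simp add: K_def)
    moreover have "C2 \<subseteq> F - {e1}" using C2 e1 by auto
    ultimately show ?thesis
      using reach_Diff_cycle_edge[OF C2(1) _ e2] by (simp add: F'_def)
  qed
  then have "{z. reach F' x z} = K"
    by (auto simp: K_def F'_def intro: reach_mono[rotated])
  then have le_induced: "card K \<le> card (induced F' K) + 1"
    using card_component_le[of F' x] fF by (simp add: F'_def)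
  have e12: "e1 \<in> induced F K" "e2 \<in> induced F K" "e1 \<noteq> e2"
    using e1 e2 C1 C2 V1 V2 by (auto simp: induced_def K_def verts_def)
  then have "card {e1, e2} \<le> card (induced F K)"
    using finite_induced[OF fF] by (intro card_mono) auto
  moreover have "induced F' K = induced F K - {e1} - {e2}"
    by (auto simp: F'_def induced_def)
  ultimately have "card (induced F' K) + 2 = card (induced F K)"
    using e12 finite_induced[OF fF] by (simp add: card_Diff_singleton_if)
  moreover note le_induced
  moreover have "x \<in> K" by (simp add: K_def reach_refl)
  ultimately show False
    using le_K card_gt_0_iff fK by force
qed

lemma injective_ends_imp_bicycle_indep:
  assumes sub: "F \<subseteq> Kgraph n k" and h: "\<forall>e\<in>F. h e \<in> ends e" and inj: "inj_on h F"
  shows "bicycle_indep n k F"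
  unfolding bicycle_indep_def
proof (intro conjI allI impI notI sub)
  have fF: "finite F" using sub finite_Kgraph finite_subset by blast
  fix C1 C2
  assume C: "C1 \<subseteq> F" "C2 \<subseteq> F" "is_cycle C1" "is_cycle C2" "C1 \<noteq> C2"
    and "\<exists>x\<in>verts C1. \<exists>y\<in>verts C2. reach F x y"
  then obtain x y where xy: "x \<in> verts C1" "y \<in> verts C2" "reach F x y" by blast
  have V1: "verts C1 \<subseteq> {z. reach F x z}"
    using C(3) xy(1) reach_mono[OF C(1)] by (auto simp: is_cycle_def)
  have V2: "verts C2 \<subseteq> {z. reach F x z}"
    using C(4) xy(2) reach_mono[OF C(2)] reach_trans[OF xy(3)] by (auto simp: is_cycle_def)
  from C(5) consider e where "e \<in> C1" "e \<notin> C2" | e where "e \<in> C2" "e \<notin> C1"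
    by blast
  then show False
  proof cases
    case 1
    with C V1 V2 show False
      by (intro injective_ends_no_two_cycles_in_component[OF fF h inj, of C1 C2 e x])
  next
    case 2
    with C V1 V2 show False
      by (intro injective_ends_no_two_cycles_in_component[OF fF h inj, of C2 C1 e x])
  qed
qed

lemma minimal_invariant_subset:
  assumes "finite V" "V \<noteq> {}" "\<phi> ` V \<subseteq> V"
  obtains Q where "Q \<subseteq> V" "Q \<noteq> {}" "\<phi> ` Q = Q" "\<And>v w. v \<in> Q \<Longrightarrow> w \<in> Q \<Longrightarrow> \<exists>t. w = (\<phi> ^^ t) v"
proof -
  define invariant where "invariant Q \<longleftrightarrow> Q \<noteq> {} \<and> Q \<subseteq> V \<and> \<phi> ` Q \<subseteq> Q" for Q
  have "invariant V"
    using assms by (simp add: invariant_def)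
  then obtain Q where Q: "invariant Q" and min: "\<And>Q'. invariant Q' \<Longrightarrow> card Q \<le> card Q'"
    using ex_has_least_nat[of invariant V card] by blast
  have fQ: "finite Q" using Q assms(1) finite_subset by (auto simp: invariant_def)
  have eq_Q: "Q' = Q" if "invariant Q'" "Q' \<subseteq> Q" for Q'
    by (intro card_subset_eq[OF fQ that(2)] le_antisym card_mono[OF fQ that(2)] min[OF that(1)])
  have "invariant (\<phi> ` Q)" "\<phi> ` Q \<subseteq> Q"
    using Q by (auto simp: invariant_def)
  then have perm: "\<phi> ` Q = Q"
    by (rule eq_Q)
  have orbit: "\<exists>t. w = (\<phi> ^^ t) v" if v: "v \<in> Q" and w: "w \<in> Q" for v w
  proof -
    have orbit_in_Q: "(\<phi> ^^ t) v \<in> Q" for t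
      using Q v by (induction t) (auto simp: invariant_def)
    have "\<phi> ` range (\<lambda>t. (\<phi> ^^ t) v) \<subseteq> range (\<lambda>t. (\<phi> ^^ t) v)"
    proof
      fix u assume "u \<in> \<phi> ` range (\<lambda>t. (\<phi> ^^ t) v)"
      then obtain t where "u = (\<phi> ^^ Suc t) v" by auto
      then show "u \<in> range (\<lambda>t. (\<phi> ^^ t) v)" by blast
    qed
    moreover have "range (\<lambda>t. (\<phi> ^^ t) v) \<subseteq> Q"
      using orbit_in_Q by blast
    ultimately have "range (\<lambda>t. (\<phi> ^^ t) v) = Q"
      using Q by (intro eq_Q) (auto simp: invariant_def)
    with w show ?thesis by blast
  qed
  have "Q \<subseteq> V" "Q \<noteq> {}"
    using Q by (simp_all add: invariant_def)
  then show thesis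
    by (rule that[OF _ _ perm orbit])
qed

lemma is_loop_iff:
  assumes "ends e = {a, b}"
  shows "is_loop e \<longleftrightarrow> a = b"
  using assms by (auto simp: is_loop_def ends_def doubleton_eq_iff)

lemma is_cycle_image_out_edges:
  assumes fQ: "finite Q" and "Q \<noteq> {}" and perm: "\<phi> ` Q = Q"
    and orbit: "\<And>v w. v \<in> Q \<Longrightarrow> w \<in> Q \<Longrightarrow> \<exists>t. w = (\<phi> ^^ t) v"
    and inj: "inj_on out Q" and ends_out: "\<And>v. v \<in> Q \<Longrightarrow> ends (out v) = {v, \<phi> v}"
  shows "is_cycle (out ` Q)"
proof -
  define C where "C = out ` Q"
  have verts_C: "verts C = Q"
    using ends_out perm by (auto simp: verts_def C_def)
  have reach_step: "reach C v (\<phi> v)" if "v \<in> Q" for v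
    using that ends_out by (intro reach_edge[of "out v"]) (auto simp: C_def)
  have reach_iter: "reach C v ((\<phi> ^^ t) v)" if "v \<in> Q" for v t
  proof (induction t)
    case (Suc t)
    have "(\<phi> ^^ t) v \<in> Q"
      using that perm by (induction t) auto
    then show ?case
      using Suc reach_step reach_trans by fastforce
  qed (simp add: reach_refl)
  have inj_\<phi>: "inj_on \<phi> Q"
    using fQ perm by (simp add: eq_card_imp_inj_on)
  have deg_2: "deg C v = 2" if v: "v \<in> Q" for v
  proof -
    obtain u where u: "u \<in> Q" "\<phi> u = v"
      using v perm by (metis imageE)
    have incidence_out: "incidence (out w) v = (if v = w \<or> v = \<phi> w then (if \<phi> w = w then 2 else 1) else 0)"
      if "w \<in> Q" for w
      using that ends_out is_loop_iff[of "out w" w "\<phi> w"] by (auto simp: incidence_def)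
    have "deg C v = (\<Sum>w\<in>Q. incidence (out w) v)"
      using fQ inj by (simp add: C_def deg_eq_sum_incidence sum.reindex)
    also have "\<dots> = (\<Sum>w\<in>{v, u}. incidence (out w) v)"
    proof (rule sum.mono_neutral_right[OF fQ])
      show "\<forall>w\<in>Q - {v, u}. incidence (out w) v = 0"
        using incidence_out inj_\<phi> u by (auto dest: inj_onD)
    qed (use v u in auto)
    also have "\<dots> = 2"
    proof (cases "u = v")
      case True
      then show ?thesis using incidence_out[OF v] u by simp
    next
      case False
      then have "\<phi> v \<noteq> v"
        using u v inj_\<phi> by (metis inj_onD)
      then show ?thesis
        using incidence_out[OF v] incidence_out[OF u(1)] u False by simp
    qed
    finally show ?thesis .
  qed
  have "reach C v w" if "v \<in> Q" "w \<in> Q" for v w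
    using orbit[OF that] reach_iter[OF that(1)] by blast
  moreover have "C \<noteq> {}" "finite C"
    using fQ \<open>Q \<noteq> {}\<close> by (simp_all add: C_def)
  ultimately show ?thesis
    unfolding is_cycle_def C_def[symmetric] verts_C using deg_2 by blast
qed

definition other_end :: "edge \<Rightarrow> nat \<Rightarrow> nat" where
  "other_end e v = (if fst e = v then fst (snd e) else fst e)"

lemma ends_other_end: "v \<in> ends e \<Longrightarrow> ends e = {v, other_end e v}"
  by (auto simp: ends_def other_end_def)

text \<open>The out-edges of a minimal nonempty vertex set closed under the successor map form a
  cycle.\<close>

lemma functional_graph_has_cycle:
  assumes fV: "finite V" and "V \<noteq> {}"
    and h: "\<forall>e\<in>G. h e \<in> ends e" and G_V: "\<forall>e\<in>G. ends e \<subseteq> V" and bij: "bij_betw h G V"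
  shows "\<exists>C\<subseteq>G. is_cycle C"
proof -
  define out where "out = the_inv_into G h"
  have out: "out v \<in> G" "h (out v) = v" if "v \<in> V" for v
    using bij that by (auto simp: out_def bij_betw_def the_inv_into_into f_the_inv_into_f)
  define \<phi> where "\<phi> v = other_end (out v) v" for v
  have ends_out: "ends (out v) = {v, \<phi> v}" if "v \<in> V" for v
    unfolding \<phi>_def using h out[OF that] by (metis ends_other_end)
  have "\<phi> ` V \<subseteq> V"
    using ends_out G_V out by blast
  then obtain Q where Q: "Q \<subseteq> V" "Q \<noteq> {}" "\<phi> ` Q = Q"
    and orbit: "\<And>v w. v \<in> Q \<Longrightarrow> w \<in> Q \<Longrightarrow> \<exists>t. w = (\<phi> ^^ t) v"
    using minimal_invariant_subset[OF fV \<open>V \<noteq> {}\<close>] by metis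
  have "inj_on out Q"
    using Q(1) out by (metis inj_onI subsetD)
  moreover have "finite Q"
    using Q(1) fV finite_subset by blast
  ultimately have "is_cycle (out ` Q)"
    using Q orbit ends_out by (intro is_cycle_image_out_edges) auto
  moreover have "out ` Q \<subseteq> G"
    using Q(1) out by blast
  ultimately show ?thesis by blast
qed

subsection \<open>Bicycle-independent sets are (1,0)-sparse\<close>

lemma bicycle_indep_subset: "bicycle_indep n k F \<Longrightarrow> F \<subseteq> Kgraph n k"
  by (simp add: bicycle_indep_def)

definition minimally_dense :: "edge set \<Rightarrow> bool" where
  "minimally_dense H \<longleftrightarrow> finite H \<and> card (verts H) < card H \<and>
     (\<forall>H'. H' \<subset> H \<longrightarrow> card H' \<le> card (verts H'))"

lemma exists_minimally_dense_subset:
  assumes "finite F" "card (verts F) < card F"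
  shows "\<exists>H\<subseteq>F. minimally_dense H"
proof -
  define dense where "dense H \<longleftrightarrow> H \<subseteq> F \<and> card (verts H) < card H" for H
  obtain H where H: "dense H" and min: "\<And>H'. dense H' \<Longrightarrow> card H \<le> card H'"
    using ex_has_least_nat[of dense F card] assms by (auto simp: dense_def)
  have "finite H" using H assms(1) finite_subset by (auto simp: dense_def)
  moreover have "card H' \<le> card (verts H')" if "H' \<subset> H" for H'
  proof (rule ccontr)
    assume "\<not> ?thesis"
    then have "dense H'"
      using that H by (auto simp: dense_def)
    then show False
      using min psubset_card_mono[OF \<open>finite H\<close> that] by fastforce
  qed
  ultimately show ?thesis
    using H by (auto simp: minimally_dense_def dense_def)
qed

text \<open>A minimally dense graph is connected: otherwise a component and the remaining edges would
  each have at most as many edges as vertices, and hence so would their disjoint union.\<close>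

lemma minimally_dense_connected:
  assumes H: "minimally_dense H" and x: "x \<in> verts H" and y: "y \<in> verts H"
  shows "reach H x y"
proof -
  define K where "K = {z. reach H x z}"
  define A where "A = induced H K"
  define B where "B = H - A"
  have fH: "finite H" and dense: "card (verts H) < card H"
    and min: "\<And>H'. H' \<subset> H \<Longrightarrow> card H' \<le> card (verts H')"
    using H by (auto simp: minimally_dense_def)
  have closed: "ends f \<subseteq> K" if "f \<in> H" "z \<in> ends f" "z \<in> K" for f z
    using component_closed[OF that(1,2)] that(3) by (simp add: K_def)
  have "B = {}"
  proof (rule ccontr)
    assume "B \<noteq> {}"
    obtain f where "f \<in> H" "x \<in> ends f"
      using x by (auto simp: verts_def)
    then have "f \<in> A"
      using closed[of f x] by (auto simp: A_def induced_def K_def reach_refl)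
    then have "A \<subset> H" "B \<subset> H"
      using \<open>B \<noteq> {}\<close> by (auto simp: A_def B_def induced_def)
    then have "card A \<le> card (verts A)" "card B \<le> card (verts B)"
      by (simp_all add: min)
    moreover have "verts A \<inter> verts B = {}"
    proof -
      have "z \<notin> K" if "z \<in> verts B" for z
      proof
        assume "z \<in> K"
        obtain g where "g \<in> B" "z \<in> ends g"
          using \<open>z \<in> verts B\<close> by (auto simp: verts_def)
        with closed[of g z] \<open>z \<in> K\<close> show False
          by (auto simp: A_def B_def induced_def)
      qed
      then show ?thesis
        using verts_induced_subset[of H K] by (auto simp: A_def)
    qed
    moreover have "H = A \<union> B" "A \<inter> B = {}"
      by (auto simp: A_def B_def induced_def)
    moreover have "finite A" "finite B"
      using fH by (simp_all add: A_def B_def finite_induced)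
    ultimately have "card (verts H) = card (verts A) + card (verts B)" "card H = card A + card B"
      by (simp_all add: verts_Un card_Un_disjoint finite_verts)
    with \<open>card A \<le> card (verts A)\<close> \<open>card B \<le> card (verts B)\<close> dense show False
      by linarith
  qed
  then have "H = A"
    using induced_subset[of H K] by (auto simp: A_def B_def)
  then have "verts H \<subseteq> K"
    using verts_induced_subset[of H K] by (simp add: A_def)
  then show ?thesis using y by (auto simp: K_def)
qed

lemma inj_on_if_fibres_le_one:
  assumes "finite A" "f ` A \<subseteq> B" "\<forall>b\<in>B. card {a\<in>A. f a = b} \<le> 1"
  shows "inj_on f A"
proof (rule inj_onI)
  fix x y assume xy: "x \<in> A" "y \<in> A" "f x = f y"
  have "finite {a\<in>A. f a = f x}"
    using assms(1) by (rule finite_subset[rotated]) blast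
  moreover have "{x, y} \<subseteq> {a\<in>A. f a = f x}"
    using xy by auto
  ultimately have "card {x, y} \<le> card {a\<in>A. f a = f x}"
    by (rule card_mono)
  also have "\<dots> \<le> 1"
    using assms(2,3) xy(1) by blast
  finally show "x = y"
    by (cases "x = y") simp_all
qed

text \<open>Deleting an edge from a minimally dense graph leaves a graph with at least as many edges as
  vertices that can be oriented with in-degree at most one, hence a functional graph.\<close>

lemma minimally_dense_Diff_edge_has_cycle:
  assumes H: "minimally_dense H" and e: "e \<in> H"
  shows "\<exists>C\<subseteq>H - {e}. is_cycle C"
proof -
  define G where "G = H - {e}"
  have fH: "finite H" and dense: "card (verts H) < card H"
    and min: "\<And>H'. H' \<subset> H \<Longrightarrow> card H' \<le> card (verts H')"
    using H by (auto simp: minimally_dense_def)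
  have fG: "finite G" using fH by (simp add: G_def)
  have fV: "finite (verts H)" using fH by (rule finite_verts)
  have G_V: "\<forall>f\<in>G. ends f \<subseteq> verts H"
    by (auto simp: G_def verts_def)
  have cap: "card (induced G V) \<le> sum (\<lambda>_. 1) V" if V: "V \<subseteq> verts H" for V
  proof -
    have "card (induced G V) \<le> card (verts (induced G V))"
      using e by (intro min) (auto simp: G_def induced_def)
    also have "\<dots> \<le> card V"
      using V by (intro card_mono finite_subset[OF _ fV]) (auto dest: subsetD[OF verts_induced_subset])
    finally show ?thesis by simp
  qed
  obtain h where h: "\<forall>f\<in>G. h f \<in> ends f" and load: "\<forall>v\<in>verts H. card {f\<in>G. h f = v} \<le> 1"
    using orientation_with_bounded_indegree[OF fG fV G_V, of "\<lambda>_. 1"] cap by blast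
  have h_V: "h ` G \<subseteq> verts H"
    using h G_V by auto
  have "inj_on h G"
    using fG h_V load by (rule inj_on_if_fibres_le_one)
  moreover have "card (verts H) \<le> card G"
    using dense e fH by (simp add: G_def)
  ultimately have "card (h ` G) = card (verts H)"
    using card_mono[OF fV h_V] by (simp add: card_image)
  then have "h ` G = verts H"
    using card_subset_eq[OF fV h_V] by blast
  then have "bij_betw h G (verts H)"
    using \<open>inj_on h G\<close> by (simp add: bij_betw_def)
  moreover have "verts H \<noteq> {}"
    using e verts_nonempty by blast
  ultimately show ?thesis
    using functional_graph_has_cycle[OF fV _ h G_V] by (simp add: G_def)
qed

text \<open>A minimally dense subgraph is connected and has a cycle avoiding any given edge; a cycle and
  a cycle avoiding one of its edges are two distinct cycles in one component.\<close>

lemma bicycle_indep_card_induced: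
  assumes F: "bicycle_indep n k F" and "finite V"
  shows "card (induced F V) \<le> card V"
proof (rule ccontr)
  assume "\<not> ?thesis"
  have fF: "finite F"
    using bicycle_indep_subset[OF F] finite_Kgraph finite_subset by blast
  have "card (verts (induced F V)) \<le> card V"
    by (rule card_mono[OF \<open>finite V\<close> verts_induced_subset])
  with \<open>\<not> ?thesis\<close> have "card (verts (induced F V)) < card (induced F V)"
    by simp
  then obtain H where H_sub: "H \<subseteq> induced F V" and H: "minimally_dense H"
    using exists_minimally_dense_subset[OF finite_induced[OF fF]] by blast
  from H_sub induced_subset have HF: "H \<subseteq> F"
    by (rule subset_trans)
  have "H \<noteq> {}"
    using H by (auto simp: minimally_dense_def)
  then obtain e0 where e0: "e0 \<in> H"
    by blast
  obtain C0 where C0: "C0 \<subseteq> H - {e0}" "is_cycle C0"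
    using minimally_dense_Diff_edge_has_cycle[OF H e0] by blast
  obtain e1 where e1: "e1 \<in> C0"
    using C0(2) by (auto simp: is_cycle_def)
  obtain C1 where C1: "C1 \<subseteq> H - {e1}" "is_cycle C1"
    using minimally_dense_Diff_edge_has_cycle[OF H] e1 C0(1) by blast
  have "verts C0 \<noteq> {}" "verts C1 \<noteq> {}"
    using C0(2) C1(2) verts_nonempty by (simp_all add: is_cycle_def)
  then obtain x y where xy: "x \<in> verts C0" "y \<in> verts C1"
    by blast
  have "C0 \<subseteq> H" "C1 \<subseteq> H"
    using C0(1) C1(1) by auto
  then have "verts C0 \<subseteq> verts H" "verts C1 \<subseteq> verts H"
    by (simp_all add: verts_mono)
  with xy have "x \<in> verts H" "y \<in> verts H"
    by blast+
  then have "reach F x y"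
    by (rule reach_mono[OF HF minimally_dense_connected[OF H]])
  moreover have "C0 \<noteq> C1" "C0 \<subseteq> F" "C1 \<subseteq> F"
    using e1 C0(1) C1(1) HF by auto
  ultimately show False
    using F[unfolded bicycle_indep_def, THEN conjunct2, rule_format, of C0 C1] C0(2) C1(2) xy
    by blast
qed

subsection \<open>The union of k bicycle matroids\<close>

lemma partition_into_injective_classes:
  fixes h :: "'a \<Rightarrow> 'b"
  assumes "finite X" and fibre: "\<And>v. card {x\<in>X. h x = v} \<le> k"
  obtains f where "\<And>i. f i \<subseteq> X" "\<And>i. inj_on h (f i)" "X = (\<Union>i<k. f i)"
proof -
  have "\<forall>v. \<exists>g. g ` {x\<in>X. h x = v} \<subseteq> {..<k} \<and> inj_on g {x\<in>X. h x = v}"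
    using assms by (intro allI card_le_inj) auto
  then obtain g where g: "\<forall>v. g v ` {x\<in>X. h x = v} \<subseteq> {..<k} \<and> inj_on (g v) {x\<in>X. h x = v}"
    by (rule choice[THEN exE])
  define f where "f i = {x\<in>X. g (h x) x = i}" for i
  have "f i \<subseteq> X" for i
    by (auto simp: f_def)
  moreover have "inj_on h (f i)" for i
  proof (rule inj_onI)
    fix x y assume "x \<in> f i" "y \<in> f i" "h x = h y"
    then show "x = y"
      using g inj_onD[of "g (h x)" "{z\<in>X. h z = h x}" x y] by (simp add: f_def)
  qed
  moreover have "X = (\<Union>i<k. f i)"
    using g by (auto simp: f_def)
  ultimately show thesis
    by (rule that)
qed

lemma union_bicycle_imp_sparse:
  assumes "union_indep k (bicycle_indep n k) X"
  shows "X \<subseteq> Kgraph n k" "sparse n k X"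
proof -
  obtain f where f: "\<forall>i<k. bicycle_indep n k (f i)" and X: "X = (\<Union>i<k. f i)"
    using assms by (auto simp: union_indep_def)
  show "X \<subseteq> Kgraph n k"
    using f X bicycle_indep_subset by blast
  have "card (induced X V) \<le> k * card V" if "V \<subseteq> {0..<n}" for V
  proof -
    have "induced X V = (\<Union>i<k. induced (f i) V)"
      by (auto simp: X induced_def)
    then have "card (induced X V) \<le> (\<Sum>i<k. card (induced (f i) V))"
      by (simp add: card_UN_le)
    also have "\<dots> \<le> (\<Sum>i<k. card V)"
      using f that finite_subset[of V "{0..<n}"] by (intro sum_mono bicycle_indep_card_induced) auto
    finally show ?thesis by simp
  qed
  then show "sparse n k X"
    by (simp add: sparse_induced)
qed

lemma sparse_imp_union_bicycle:
  assumes X: "X \<subseteq> Kgraph n k" and "sparse n k X"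
  shows "union_indep k (bicycle_indep n k) X"
proof -
  have fX: "finite X"
    using X finite_Kgraph finite_subset by blast
  have ends_X: "\<forall>e\<in>X. ends e \<subseteq> {0..<n}"
    using X ends_Kgraph by blast
  have "\<forall>V\<subseteq>{0..<n}. card (induced X V) \<le> sum (\<lambda>_. k) V"
    using \<open>sparse n k X\<close> by (simp add: sparse_induced mult.commute)
  then obtain h where h: "\<forall>e\<in>X. h e \<in> ends e" and load: "\<forall>v\<in>{0..<n}. card {e\<in>X. h e = v} \<le> k"
    using orientation_with_bounded_indegree[OF fX finite_atLeastLessThan ends_X] by blast
  have fibres: "card {e\<in>X. h e = v} \<le> k" for v
  proof (cases "v < n")
    case False
    have "h e < n" if "e \<in> X" for e
      using h ends_X that by fastforce
    with False have "{e\<in>X. h e = v} = {}"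
      by fastforce
    then show ?thesis
      by (metis card.empty zero_le)
  qed (use load in simp)
  obtain f where f: "\<And>i. f i \<subseteq> X" "\<And>i. inj_on h (f i)" and X_f: "X = (\<Union>i<k. f i)"
    using partition_into_injective_classes[OF fX fibres] by metis
  have "bicycle_indep n k (f i)" if "i < k" for i
  proof (rule injective_ends_imp_bicycle_indep)
    show "f i \<subseteq> Kgraph n k"
      using f(1) X by (rule subset_trans)
    show "inj_on h (f i)"
      by (rule f(2))
    show "\<forall>e\<in>f i. h e \<in> ends e"
      using f(1) h by blast
  qed
  with X_f show ?thesis
    unfolding union_indep_def by blast
qed

lemma union_bicycle_iff_sparse:
  "union_indep k (bicycle_indep n k) X \<longleftrightarrow> X \<subseteq> Kgraph n k \<and> sparse n k X"
  using union_bicycle_imp_sparse sparse_imp_union_bicycle by blast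

lemma matroidI:
  assumes "finite E" "\<And>X. I X \<Longrightarrow> X \<subseteq> E" "I {}" "\<And>X Y. I Y \<Longrightarrow> X \<subseteq> Y \<Longrightarrow> I X"
    "\<And>X Y. I X \<Longrightarrow> I Y \<Longrightarrow> card X < card Y \<Longrightarrow> \<exists>e\<in>Y - X. I (insert e X)"
  shows "matroid E I"
  using assms unfolding matroid_def by blast

lemma matroid_finite: "matroid E I \<Longrightarrow> I X \<Longrightarrow> finite X"
  unfolding matroid_def by (meson finite_subset)

lemma matroid_subset: "matroid E I \<Longrightarrow> I Y \<Longrightarrow> X \<subseteq> Y \<Longrightarrow> I X"
  unfolding matroid_def by blast

lemma matroid_augment:
  "matroid E I \<Longrightarrow> I X \<Longrightarrow> I Y \<Longrightarrow> card X < card Y \<Longrightarrow> \<exists>e\<in>Y - X. I (insert e X)"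
  unfolding matroid_def by blast

lemma matroid_trunc_indep:
  assumes M: "matroid E I"
  shows "matroid E (trunc_indep r I)"
  unfolding trunc_indep_def
proof (rule matroidI)
  show "I X \<and> card X \<le> r" if "I Y \<and> card Y \<le> r" "X \<subseteq> Y" for X Y
    using that matroid_subset[OF M] card_mono[OF matroid_finite[OF M]] by (meson le_trans)
  show "\<exists>e\<in>Y - X. I (insert e X) \<and> card (insert e X) \<le> r"
    if XY: "I X \<and> card X \<le> r" "I Y \<and> card Y \<le> r" "card X < card Y" for X Y
  proof -
    obtain e where "e \<in> Y - X" "I (insert e X)"
      using matroid_augment[OF M] XY by blast
    with XY matroid_finite[OF M] show ?thesis by auto
  qed
  show "finite E" "I {} \<and> card {} \<le> r"
    using M by (simp_all add: matroid_def)
  show "X \<subseteq> E" if "I X \<and> card X \<le> r" for X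
    using M that unfolding matroid_def by blast
qed

lemma bases_trunc_indep:
  assumes M: "matroid E I" and Y: "I Y" "r \<le> card Y"
  shows "bases (trunc_indep r I) = {B. I B \<and> card B = r}"
proof (intro set_eqI iffI; simp)
  fix B
  show "I B \<and> card B = r" if "B \<in> bases (trunc_indep r I)"
  proof -
    have B: "I B" "card B \<le> r"
      and max: "\<And>B'. I B' \<Longrightarrow> card B' \<le> r \<Longrightarrow> B \<subseteq> B' \<Longrightarrow> B' = B"
      using that by (auto simp: bases_def trunc_indep_def)
    obtain Y' where "Y' \<subseteq> Y" "card Y' = r"
      using Y(2) obtain_subset_with_card_n by metis
    then have "I Y'"
      using matroid_subset[OF M Y(1)] by blast
    have "card B = r"
    proof (rule ccontr)
      assume "card B \<noteq> r"
      then have "card B < card Y'"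
        using B(2) \<open>card Y' = r\<close> by simp
      then obtain e where "e \<in> Y' - B" "I (insert e B)"
        using matroid_augment[OF M B(1) \<open>I Y'\<close>] by blast
      moreover have "card (insert e B) \<le> r"
        using \<open>card B < card Y'\<close> \<open>card Y' = r\<close> matroid_finite[OF M B(1)]
        by (simp add: card_insert_if)
      ultimately show False
        using max[of "insert e B"] by blast
    qed
    with B show ?thesis by simp
  qed
  show "B \<in> bases (trunc_indep r I)" if B: "I B \<and> card B = r"
  proof -
    have "B' = B" if "I B'" "card B' \<le> r" "B \<subseteq> B'" for B'
      using card_seteq[OF matroid_finite[OF M that(1)] that(3)] that(2) B by simp
    with B show ?thesis
      by (simp add: bases_def trunc_indep_def)
  qed
qed

subsection \<open>The sparsity matroid\<close>

lemma sparse_subset: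
  assumes "sparse n k Y" "X \<subseteq> Y" "finite Y"
  shows "sparse n k X"
proof -
  have "card (induced X V) \<le> card (induced Y V)" for V
    using assms(2,3) by (intro card_mono finite_induced) (auto simp: induced_def)
  then show ?thesis
    using assms(1) unfolding sparse_induced by (meson le_trans)
qed

definition tight :: "nat \<Rightarrow> nat \<Rightarrow> edge set \<Rightarrow> nat set \<Rightarrow> bool" where
  "tight n k X V \<longleftrightarrow> V \<subseteq> {0..<n} \<and> card (induced X V) = k * card V"

lemma tight_Un:
  assumes X: "finite X" "sparse n k X" and V: "tight n k X V1" "tight n k X V2"
  shows "tight n k X (V1 \<union> V2)"
proof -
  have "finite V1" "finite V2"
    using V finite_subset by (auto simp: tight_def)
  then have "k * card (V1 \<union> V2) + k * card (V1 \<inter> V2) = k * card V1 + k * card V2"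
    by (simp add: card_Un_Int[symmetric] add_mult_distrib2[symmetric])
  moreover have "V1 \<inter> V2 \<subseteq> {0..<n}" "V1 \<union> V2 \<subseteq> {0..<n}"
    using V by (auto simp: tight_def)
  then have "card (induced X (V1 \<inter> V2)) \<le> k * card (V1 \<inter> V2)"
    "card (induced X (V1 \<union> V2)) \<le> k * card (V1 \<union> V2)"
    using X(2) by (simp_all add: sparse_induced)
  ultimately show ?thesis
    using card_induced_supermodular[OF X(1), of V1 V2] V by (auto simp: tight_def)
qed

lemma tight_UN:
  assumes X: "finite X" "sparse n k X" and "finite A" "A \<noteq> {}" "\<forall>a\<in>A. tight n k X (T a)"
  shows "tight n k X (\<Union>a\<in>A. T a)"
  using assms(3-5) by (induction A rule: finite_ne_induct) (simp_all add: tight_Un[OF X])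

lemma not_sparse_insert_imp_tight:
  assumes X: "finite X" "sparse n k X" and e: "e \<notin> X" and "\<not> sparse n k (insert e X)"
  shows "\<exists>V. tight n k X V \<and> ends e \<subseteq> V"
proof -
  obtain V where V: "V \<subseteq> {0..<n}" "k * card V < card (induced (insert e X) V)"
    using assms(4) by (auto simp: sparse_induced not_le)
  moreover have "card (induced X V) \<le> k * card V"
    using X(2) V(1) by (simp add: sparse_induced)
  ultimately show ?thesis
    using card_induced_insert[OF X(1) e, of V] by (auto simp: tight_def split: if_splits)
qed

text \<open>If no edge of Y - X can be added to X, then all of Y - X lies in a single tight set U;
  inside U, Y has at most as many edges as X, and outside U it has no more.\<close>

lemma sparse_augment:
  assumes X: "X \<subseteq> Kgraph n k" "sparse n k X" and Y: "Y \<subseteq> Kgraph n k" "sparse n k Y"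
    and less: "card X < card Y"
  shows "\<exists>e\<in>Y - X. sparse n k (insert e X)"
proof (rule ccontr)
  assume no_augment: "\<not> ?thesis"
  have fX: "finite X" and fY: "finite Y"
    using X Y finite_Kgraph finite_subset by blast+
  have "\<exists>V. tight n k X V \<and> ends e \<subseteq> V" if "e \<in> Y - X" for e
    using not_sparse_insert_imp_tight[OF fX X(2)] that no_augment by blast
  then obtain T where T: "\<And>e. e \<in> Y - X \<Longrightarrow> tight n k X (T e) \<and> ends e \<subseteq> T e"
    by metis
  define U where "U = (\<Union>e\<in>Y - X. T e)"
  have "Y - X \<noteq> {}"
    using less card_mono[OF fX, of Y] by auto
  then have "tight n k X U"
    unfolding U_def using fY T by (intro tight_UN[OF fX X(2)]) auto
  then have "card (induced Y U) \<le> card (induced X U)"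
    using Y(2) by (simp add: tight_def sparse_induced)
  moreover have "Y - induced Y U \<subseteq> X - induced X U"
    using T by (fastforce simp: induced_def U_def)
  then have "card (Y - induced Y U) \<le> card (X - induced X U)"
    using fX by (intro card_mono) auto
  moreover have "card Y = card (induced Y U) + card (Y - induced Y U)"
    "card X = card (induced X U) + card (X - induced X U)"
    using fX fY by (simp_all add: card_Diff_subset finite_induced induced_subset card_mono)
  ultimately show False
    using less by linarith
qed

lemma matroid_union_bicycle: "matroid (Kgraph n k) (union_indep k (bicycle_indep n k))"
  unfolding union_bicycle_iff_sparse
proof (rule matroidI)
  show "{} \<subseteq> Kgraph n k \<and> sparse n k {}"
    by (simp add: sparse_induced induced_def)
  show "X \<subseteq> Kgraph n k \<and> sparse n k X" if "Y \<subseteq> Kgraph n k \<and> sparse n k Y" "X \<subseteq> Y" for X Y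
    using that sparse_subset finite_subset[OF _ finite_Kgraph] by blast
  show "\<exists>e\<in>Y - X. insert e X \<subseteq> Kgraph n k \<and> sparse n k (insert e X)"
    if "X \<subseteq> Kgraph n k \<and> sparse n k X" "Y \<subseteq> Kgraph n k \<and> sparse n k Y" "card X < card Y" for X Y
    using that sparse_augment[of X n k Y] by blast
qed (use finite_Kgraph in blast)+

definition loops :: "nat \<Rightarrow> nat \<Rightarrow> edge set" where
  "loops n k = (\<lambda>(v, i). (v, v, i)) ` ({..<n} \<times> {..<k})"

lemma card_loops: "card (loops n k) = n * k"
  unfolding loops_def by (subst card_image) (auto simp: inj_on_def card_cartesian_product)

lemma union_bicycle_loops: "union_indep k (bicycle_indep n k) (loops n k)"
  unfolding union_bicycle_iff_sparse sparse_induced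
proof (intro conjI allI impI)
  show "loops n k \<subseteq> Kgraph n k"
    by (auto simp: loops_def Kgraph_def)
  fix V assume "V \<subseteq> {0..<n}"
  then have "induced (loops n k) V \<subseteq> (\<lambda>(v, i). (v, v, i)) ` (V \<times> {..<k})" "finite V"
    by (auto simp: loops_def induced_def ends_def finite_subset)
  then have "card (induced (loops n k) V) \<le> card ((\<lambda>(v, i). (v, v, i)) ` (V \<times> {..<k}))"
    by (intro card_mono) auto
  also have "\<dots> = k * card V"
    by (subst card_image) (auto simp: inj_on_def card_cartesian_product)
  finally show "card (induced (loops n k) V) \<le> k * card V" .
qed

theorem corollary2:
  fixes n k l :: nat
  assumes "k \<ge> 1" and "l \<le> 2 * k - 1" and "l \<le> k * n"
  shows "\<exists>r. matroid (Kgraph n k) (trunc_indep r (union_indep k (bicycle_indep n k)))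
            \<and> Nfam n k l = bases (trunc_indep r (union_indep k (bicycle_indep n k)))"
proof (intro exI conjI)
  define r where "r = k * n - l"
  have M: "matroid (Kgraph n k) (union_indep k (bicycle_indep n k))"
    by (rule matroid_union_bicycle)
  then show "matroid (Kgraph n k) (trunc_indep r (union_indep k (bicycle_indep n k)))"
    by (rule matroid_trunc_indep)
  have "r \<le> card (loops n k)"
    by (simp add: r_def card_loops mult.commute)
  with M union_bicycle_loops have
    "bases (trunc_indep r (union_indep k (bicycle_indep n k)))
       = {B. union_indep k (bicycle_indep n k) B \<and> card B = r}"
    by (rule bases_trunc_indep)
  moreover have "int k * int n - int l = int r"
    using assms(3) by (simp add: r_def of_nat_diff)
  ultimately show "Nfam n k l = bases (trunc_indep r (union_indep k (bicycle_indep n k)))"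
    by (auto simp: Nfam_def union_bicycle_iff_sparse)
qed

end
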